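(* Let $X$ be a connected, locally path connected space and $H\le\pi_1(X,x_0)$. If $X$ is homotopically Hausdorff relative to $H$, then $H$ is a closed subgroup of $\pi_1^{wh}(X,x_0)$.
   Context: $\pi_1^{wh}(X,x_0)$ is $\pi_1(X,x_0)$ with the whisker topology, having as basis the sets $[\alpha]\,i_*\pi_1(U,x_0)$ for $[\alpha]\in\pi_1(X,x_0)$ and $U$ an open neighborhood of $x_0$. $X$ is homotopically Hausdorff relative to $H$ if for every $g\in\pi_1(X,x_0)\setminus H$ and every path $\alpha$ from $x_0$ there is an open neighborhood $U$ of $\alpha(1)$ such that no loop $\gamma:(I,\partial I)\to(U,\alpha(1))$ satisfies $[\alpha*\gamma*\alpha^{-1}]\in Hg$. *)

theory Defs
  imports "HOL-Analysis.Analysis" "HOL-Algebra.Coset"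
begin

text \<open>The space X is a subset S of a topological type, with the subspace topology.\<close>

definition loop_at :: "'a::topological_space set \<Rightarrow> 'a \<Rightarrow> (real \<Rightarrow> 'a) \<Rightarrow> bool" where
  "loop_at S x0 g \<longleftrightarrow> path g \<and> path_image g \<subseteq> S \<and> pathstart g = x0 \<and> pathfinish g = x0"

definition path_class :: "'a::topological_space set \<Rightarrow> (real \<Rightarrow> 'a) \<Rightarrow> (real \<Rightarrow> 'a) set" where
  "path_class S g = {h. homotopic_paths S g h}"

definition fundamental_group ::
  "'a::topological_space set \<Rightarrow> 'a \<Rightarrow> ((real \<Rightarrow> 'a) set) monoid" where
  "fundamental_group S x0 =
     \<lparr> carrier = {path_class S g | g. loop_at S x0 g},
       mult = (\<lambda>A B. {h. \<exists>a\<in>A. \<exists>b\<in>B. homotopic_paths S (a +++ b) h}),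
       one = path_class S (\<lambda>_. x0) \<rparr>"

definition incl_image :: "'a::topological_space set \<Rightarrow> 'a set \<Rightarrow> 'a \<Rightarrow> (real \<Rightarrow> 'a) set set" where
  "incl_image S U x0 = {path_class S g | g. loop_at U x0 g}"

definition whisker_topology :: "'a::topological_space set \<Rightarrow> 'a \<Rightarrow> (real \<Rightarrow> 'a) set topology" where
  "whisker_topology S x0 =
     topology_generated_by
       {{a \<otimes>\<^bsub>fundamental_group S x0\<^esub> k | k. k \<in> incl_image S U x0}
        | a U. a \<in> carrier (fundamental_group S x0) \<and> openin (top_of_set S) U \<and> x0 \<in> U}"

definition homotopically_hausdorff_rel ::
  "'a::topological_space set \<Rightarrow> 'a \<Rightarrow> (real \<Rightarrow> 'a) set set \<Rightarrow> bool" where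
  "homotopically_hausdorff_rel S x0 H \<longleftrightarrow>
     (\<forall>g \<in> carrier (fundamental_group S x0) - H.
       \<forall>\<alpha>. path \<alpha> \<and> path_image \<alpha> \<subseteq> S \<and> pathstart \<alpha> = x0 \<longrightarrow>
         (\<exists>U. openin (top_of_set S) U \<and> pathfinish \<alpha> \<in> U \<and>
            \<not> (\<exists>\<gamma>. loop_at U (pathfinish \<alpha>) \<gamma> \<and>
                  path_class S (\<alpha> +++ \<gamma> +++ reversepath \<alpha>)
                    \<in> H #>\<^bsub>fundamental_group S x0\<^esub> g)))"

end

theory Submission
  imports Defs
begin

text \<open>As \<open>i\<^sub>*\<pi>\<^sub>1(U)\<close> is closed under inverses, the basic open set \<open>g i\<^sub>*\<pi>\<^sub>1(U)\<close> then misses \<open>H\<close>,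
  since \<open>gk \<in> H\<close> gives \<open>k\<^sup>-\<^sup>1 = (gk)\<^sup>-\<^sup>1g \<in> Hg\<close>. So the complement of \<open>H\<close> is open.\<close>

text \<open>The library's group laws for paths are stated with \<open>linepath\<close>, so they need a vector
  space; composing them on \<open>[0,1]\<close> with \<open>p\<close> transfers them to arbitrary topological spaces.\<close>

lemma homotopic_paths_compose_path:
  fixes p :: "real \<Rightarrow> 'a::topological_space"
  assumes "homotopic_paths {0..1} u v" "path p" "path_image p \<subseteq> S"
  shows "homotopic_paths S (p \<circ> u) (p \<circ> v)"
  using assms by (intro homotopic_paths_continuous_image) (auto simp: path_def path_image_def)

lemma compose_linepath_0_1 [simp]: "p \<circ> linepath 0 (1::real) = p"
  by (simp add: fun_eq_iff)

lemma compose_linepath_refl: "p \<circ> linepath a a = (\<lambda>_. p a)"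
  by (simp add: fun_eq_iff linepath_refl)

lemma homotopic_paths_rid_const:
  fixes p :: "real \<Rightarrow> 'a::topological_space"
  assumes "path p" "path_image p \<subseteq> S"
  shows "homotopic_paths S (p +++ (\<lambda>_. pathfinish p)) p"
  using homotopic_paths_compose_path[OF homotopic_paths_rid[of "linepath 0 1" "{0..1}"] assms]
  by (simp add: path_compose_join compose_linepath_refl closed_segment_eq_real_ivl pathfinish_def)

lemma homotopic_paths_lid_const:
  fixes p :: "real \<Rightarrow> 'a::topological_space"
  assumes "path p" "path_image p \<subseteq> S"
  shows "homotopic_paths S ((\<lambda>_. pathstart p) +++ p) p"
  using homotopic_paths_compose_path[OF homotopic_paths_lid[of "linepath 0 1" "{0..1}"] assms]
  by (simp add: path_compose_join compose_linepath_refl closed_segment_eq_real_ivl pathstart_def)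

lemma homotopic_paths_linv_const:
  fixes p :: "real \<Rightarrow> 'a::topological_space"
  assumes "path p" "path_image p \<subseteq> S"
  shows "homotopic_paths S (reversepath p +++ p) (\<lambda>_. pathfinish p)"
  using homotopic_paths_compose_path[OF homotopic_paths_linv[of "linepath 0 1" "{0..1}"] assms]
  by (simp add: path_compose_join path_compose_reversepath compose_linepath_refl
      closed_segment_eq_real_ivl pathfinish_def del: reversepath_linepath)

lemma loop_at_join: "loop_at S x0 p \<Longrightarrow> loop_at S x0 q \<Longrightarrow> loop_at S x0 (p +++ q)"
  by (auto simp: loop_at_def path_image_join)

lemma loop_at_reversepath: "loop_at S x0 p \<Longrightarrow> loop_at S x0 (reversepath p)"
  by (auto simp: loop_at_def)

lemma loop_at_const: "x0 \<in> S \<Longrightarrow> loop_at S x0 (\<lambda>_. x0)"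
  by (auto simp: loop_at_def path_def path_image_def pathstart_def pathfinish_def)

lemma loop_at_mono: "loop_at U x0 p \<Longrightarrow> U \<subseteq> S \<Longrightarrow> loop_at S x0 p"
  by (auto simp: loop_at_def)

lemma path_class_eqI: "homotopic_paths S p q \<Longrightarrow> path_class S p = path_class S q"
  unfolding path_class_def by (auto intro: homotopic_paths_trans homotopic_paths_sym)

lemma carrier_fundamental_group:
  "carrier (fundamental_group S x0) = {path_class S g | g. loop_at S x0 g}"
  by (simp add: fundamental_group_def)

lemma one_fundamental_group: "\<one>\<^bsub>fundamental_group S x0\<^esub> = path_class S (\<lambda>_. x0)"
  by (simp add: fundamental_group_def)

lemma mult_path_class:
  assumes "loop_at S x0 p" "loop_at S x0 q"
  shows "path_class S p \<otimes>\<^bsub>fundamental_group S x0\<^esub> path_class S q = path_class S (p +++ q)"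
proof -
  have fin: "pathfinish p = pathstart q" and refl: "homotopic_paths S p p" "homotopic_paths S q q"
    using assms by (auto simp: loop_at_def)
  have "homotopic_paths S (p +++ q) h"
    if "homotopic_paths S p a" "homotopic_paths S q b" "homotopic_paths S (a +++ b) h" for a b h
    using homotopic_paths_join[OF that(1,2) fin] that(3) by (rule homotopic_paths_trans)
  then show ?thesis
    unfolding fundamental_group_def path_class_def by auto (use refl in blast)
qed

lemma path_class_reversepath_join:
  assumes "loop_at S x0 p"
  shows "path_class S (reversepath p +++ p) = \<one>\<^bsub>fundamental_group S x0\<^esub>"
  using assms homotopic_paths_linv_const[of p S] unfolding one_fundamental_group
  by (intro path_class_eqI) (auto simp: loop_at_def)

lemma group_fundamental_group:
  assumes "x0 \<in> S"
  shows "group (fundamental_group S x0)"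
proof (rule groupI)
  let ?G = "fundamental_group S x0"
  show "x \<otimes>\<^bsub>?G\<^esub> y \<in> carrier ?G" if "x \<in> carrier ?G" "y \<in> carrier ?G" for x y
    using that unfolding carrier_fundamental_group by (auto simp: mult_path_class intro!: loop_at_join)
  show "\<one>\<^bsub>?G\<^esub> \<in> carrier ?G"
    unfolding carrier_fundamental_group one_fundamental_group using loop_at_const[OF assms] by blast
  show "x \<otimes>\<^bsub>?G\<^esub> y \<otimes>\<^bsub>?G\<^esub> z = x \<otimes>\<^bsub>?G\<^esub> (y \<otimes>\<^bsub>?G\<^esub> z)"
    if xyz: "x \<in> carrier ?G" "y \<in> carrier ?G" "z \<in> carrier ?G" for x y z
  proof -
    obtain p q r where loops: "loop_at S x0 p" "loop_at S x0 q" "loop_at S x0 r"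
      and "x = path_class S p" "y = path_class S q" "z = path_class S r"
      using xyz unfolding carrier_fundamental_group by blast
    moreover have "path_class S (p +++ (q +++ r)) = path_class S ((p +++ q) +++ r)"
      using loops by (intro path_class_eqI homotopic_paths_assoc) (auto simp: loop_at_def)
    ultimately show ?thesis
      by (simp add: mult_path_class loop_at_join)
  qed
  show "\<one>\<^bsub>?G\<^esub> \<otimes>\<^bsub>?G\<^esub> x = x" if x: "x \<in> carrier ?G" for x
  proof -
    obtain p where p: "loop_at S x0 p" "x = path_class S p"
      using x unfolding carrier_fundamental_group by blast
    then have "path_class S ((\<lambda>_. x0) +++ p) = x"
      using homotopic_paths_lid_const[of p S]
      by (simp, intro path_class_eqI) (auto simp: loop_at_def)
    with p show ?thesis
      by (simp add: one_fundamental_group mult_path_class loop_at_const[OF assms])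
  qed
  show "\<exists>y\<in>carrier ?G. y \<otimes>\<^bsub>?G\<^esub> x = \<one>\<^bsub>?G\<^esub>" if x: "x \<in> carrier ?G" for x
  proof -
    obtain p where p: "loop_at S x0 p" "x = path_class S p"
      using x unfolding carrier_fundamental_group by blast
    then have "path_class S (reversepath p) \<otimes>\<^bsub>?G\<^esub> x = \<one>\<^bsub>?G\<^esub>"
      by (simp add: mult_path_class loop_at_reversepath path_class_reversepath_join)
    moreover have "path_class S (reversepath p) \<in> carrier ?G"
      using loop_at_reversepath[OF p(1)] unfolding carrier_fundamental_group by blast
    ultimately show ?thesis by blast
  qed
qed

lemma inv_path_class:
  assumes "x0 \<in> S" "loop_at S x0 p"
  shows "inv\<^bsub>fundamental_group S x0\<^esub> path_class S p = path_class S (reversepath p)"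
proof (rule group.inv_equality[OF group_fundamental_group[OF assms(1)]])
  show "path_class S (reversepath p) \<otimes>\<^bsub>fundamental_group S x0\<^esub> path_class S p
      = \<one>\<^bsub>fundamental_group S x0\<^esub>"
    using assms(2) by (simp add: mult_path_class loop_at_reversepath path_class_reversepath_join)
qed (use assms(2) loop_at_reversepath in \<open>auto simp: carrier_fundamental_group\<close>)

lemma incl_image_subset_carrier:
  "U \<subseteq> S \<Longrightarrow> incl_image S U x0 \<subseteq> carrier (fundamental_group S x0)"
  unfolding incl_image_def carrier_fundamental_group using loop_at_mono by blast

lemma one_in_incl_image: "x0 \<in> U \<Longrightarrow> \<one>\<^bsub>fundamental_group S x0\<^esub> \<in> incl_image S U x0"
  unfolding incl_image_def one_fundamental_group using loop_at_const by blast

lemma inv_in_incl_image: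
  assumes "x0 \<in> S" "U \<subseteq> S" "k \<in> incl_image S U x0"
  shows "inv\<^bsub>fundamental_group S x0\<^esub> k \<in> incl_image S U x0"
proof -
  obtain \<gamma> where "loop_at U x0 \<gamma>" "k = path_class S \<gamma>"
    using assms(3) unfolding incl_image_def by blast
  moreover from this have "inv\<^bsub>fundamental_group S x0\<^esub> k = path_class S (reversepath \<gamma>)"
    using assms(1,2) by (simp add: inv_path_class loop_at_mono)
  ultimately show ?thesis
    unfolding incl_image_def using loop_at_reversepath by blast
qed

lemma openin_whisker_topology_basis:
  assumes "a \<in> carrier (fundamental_group S x0)" "openin (top_of_set S) U" "x0 \<in> U"
  shows "openin (whisker_topology S x0)
           {a \<otimes>\<^bsub>fundamental_group S x0\<^esub> k | k. k \<in> incl_image S U x0}"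
  unfolding whisker_topology_def openin_topology_generated_by_iff
  by (rule generate_topology_on.Basis) (use assms in auto)

lemma topspace_whisker_topology:
  assumes "x0 \<in> S"
  shows "topspace (whisker_topology S x0) = carrier (fundamental_group S x0)"
proof
  interpret group "fundamental_group S x0"
    by (rule group_fundamental_group[OF assms])
  show "topspace (whisker_topology S x0) \<subseteq> carrier (fundamental_group S x0)"
  proof
    fix x assume "x \<in> topspace (whisker_topology S x0)"
    then obtain a U k where "a \<in> carrier (fundamental_group S x0)" "openin (top_of_set S) U"
      "k \<in> incl_image S U x0" "x = a \<otimes>\<^bsub>fundamental_group S x0\<^esub> k"
      unfolding whisker_topology_def topology_generated_by_topspace by blast
    then show "x \<in> carrier (fundamental_group S x0)"
      using incl_image_subset_carrier[OF openin_imp_subset] by blast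
  qed
  show "carrier (fundamental_group S x0) \<subseteq> topspace (whisker_topology S x0)"
  proof
    fix a assume a: "a \<in> carrier (fundamental_group S x0)"
    then have "a \<in> {a \<otimes>\<^bsub>fundamental_group S x0\<^esub> k | k. k \<in> incl_image S S x0}"
      using one_in_incl_image[OF assms] by force
    then show "a \<in> topspace (whisker_topology S x0)"
      using openin_whisker_topology_basis[OF a openin_subtopology_self assms] openin_subset by blast
  qed
qed

lemma path_class_conj_const:
  assumes "loop_at S x0 \<gamma>"
  shows "path_class S ((\<lambda>_. x0) +++ \<gamma> +++ reversepath (\<lambda>_. x0)) = path_class S \<gamma>"
proof -
  have "x0 \<in> S"
    using assms pathstart_in_path_image unfolding loop_at_def by blast
  then have "loop_at S x0 (\<gamma> +++ (\<lambda>_. x0))"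
    using assms loop_at_const loop_at_join by blast
  then have "homotopic_paths S ((\<lambda>_. x0) +++ (\<gamma> +++ (\<lambda>_. x0))) (\<gamma> +++ (\<lambda>_. x0))"
    using homotopic_paths_lid_const[of "\<gamma> +++ (\<lambda>_. x0)" S] by (auto simp: loop_at_def)
  moreover have "homotopic_paths S (\<gamma> +++ (\<lambda>_. x0)) \<gamma>"
    using assms homotopic_paths_rid_const[of \<gamma> S] by (auto simp: loop_at_def)
  ultimately have "homotopic_paths S ((\<lambda>_. x0) +++ \<gamma> +++ (\<lambda>_. x0)) \<gamma>"
    by (rule homotopic_paths_trans)
  then show ?thesis
    by (simp add: reversepath_def path_class_eqI)
qed

lemma homotopically_hausdorff_rel_at_basepoint:
  assumes "homotopically_hausdorff_rel S x0 H" "x0 \<in> S"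
    and "g \<in> carrier (fundamental_group S x0) - H"
  obtains U where "openin (top_of_set S) U" "x0 \<in> U"
    and "\<And>\<gamma>. loop_at U x0 \<gamma> \<Longrightarrow> path_class S \<gamma> \<notin> H #>\<^bsub>fundamental_group S x0\<^esub> g"
proof -
  have "path (\<lambda>_. x0) \<and> path_image (\<lambda>_::real. x0) \<subseteq> S \<and> pathstart (\<lambda>_::real. x0) = x0"
    using loop_at_const[OF assms(2)] by (auto simp: loop_at_def)
  from assms(1)[unfolded homotopically_hausdorff_rel_def, rule_format, OF assms(3) this]
  obtain U where U: "openin (top_of_set S) U" "x0 \<in> U"
    and no_loop: "\<not> (\<exists>\<gamma>. loop_at U x0 \<gamma> \<and> path_class S ((\<lambda>_. x0) +++ \<gamma> +++ reversepath (\<lambda>_. x0))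
                          \<in> H #>\<^bsub>fundamental_group S x0\<^esub> g)"
    unfolding pathfinish_def by blast
  have "path_class S \<gamma> \<notin> H #>\<^bsub>fundamental_group S x0\<^esub> g" if "loop_at U x0 \<gamma>" for \<gamma>
    using no_loop that path_class_conj_const[OF loop_at_mono[OF that openin_imp_subset[OF U(1)]]]
    by auto
  with U that show ?thesis by blast
qed

lemma (in group) inv_in_rcos_if_mult_in_subgroup:
  assumes "subgroup H G" "g \<in> carrier G" "k \<in> carrier G" "g \<otimes> k \<in> H"
  shows "inv k \<in> H #> g"
proof -
  have "inv k = inv (g \<otimes> k) \<otimes> g"
    using assms(2,3) by (simp add: inv_mult_group m_assoc)
  moreover have "inv (g \<otimes> k) \<in> H"
    using assms(1,4) by (rule subgroup.m_inv_closed)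
  ultimately show ?thesis
    unfolding r_coset_def by blast
qed

lemma whisker_basis_subset_compl:
  assumes "x0 \<in> S" "subgroup H (fundamental_group S x0)" "U \<subseteq> S"
    and g: "g \<in> carrier (fundamental_group S x0)"
    and no_loop: "\<And>\<gamma>. loop_at U x0 \<gamma> \<Longrightarrow> path_class S \<gamma> \<notin> H #>\<^bsub>fundamental_group S x0\<^esub> g"
  shows "{g \<otimes>\<^bsub>fundamental_group S x0\<^esub> k | k. k \<in> incl_image S U x0}
           \<subseteq> carrier (fundamental_group S x0) - H"
proof
  let ?G = "fundamental_group S x0"
  interpret group ?G by (rule group_fundamental_group[OF assms(1)])
  fix x assume "x \<in> {g \<otimes>\<^bsub>?G\<^esub> k | k. k \<in> incl_image S U x0}"
  then obtain k where k: "k \<in> incl_image S U x0" and x: "x = g \<otimes>\<^bsub>?G\<^esub> k"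
    by blast
  obtain \<gamma> where "loop_at U x0 \<gamma>" "inv\<^bsub>?G\<^esub> k = path_class S \<gamma>"
    using inv_in_incl_image[OF assms(1,3) k] unfolding incl_image_def by blast
  then have "inv\<^bsub>?G\<^esub> k \<notin> H #>\<^bsub>?G\<^esub> g"
    using no_loop by simp
  moreover have kG: "k \<in> carrier ?G"
    using incl_image_subset_carrier[OF assms(3)] k by blast
  ultimately have "g \<otimes>\<^bsub>?G\<^esub> k \<notin> H"
    using inv_in_rcos_if_mult_in_subgroup[OF assms(2) g] by blast
  with g kG show "x \<in> carrier ?G - H"
    unfolding x by simp
qed

theorem proposition3p9:
  fixes S :: "'a::topological_space set" and x0 :: 'a and H :: "(real \<Rightarrow> 'a) set set"
  assumes "x0 \<in> S"
    and "connected S"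
    and "locally path_connected S"
    and "subgroup H (fundamental_group S x0)"
    and "homotopically_hausdorff_rel S x0 H"
  shows "closedin (whisker_topology S x0) H"
proof -
  let ?G = "fundamental_group S x0"
  interpret group ?G by (rule group_fundamental_group[OF assms(1)])
  have "\<exists>T. openin (whisker_topology S x0) T \<and> g \<in> T \<and> T \<subseteq> carrier ?G - H"
    if g: "g \<in> carrier ?G - H" for g
  proof -
    obtain U where U: "openin (top_of_set S) U" "x0 \<in> U"
      and no_loop: "\<And>\<gamma>. loop_at U x0 \<gamma> \<Longrightarrow> path_class S \<gamma> \<notin> H #>\<^bsub>?G\<^esub> g"
      using homotopically_hausdorff_rel_at_basepoint[OF assms(5,1) g] by blast
    have "g \<in> {g \<otimes>\<^bsub>?G\<^esub> k | k. k \<in> incl_image S U x0}"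
      using one_in_incl_image[OF U(2)] g by force
    moreover have "{g \<otimes>\<^bsub>?G\<^esub> k | k. k \<in> incl_image S U x0} \<subseteq> carrier ?G - H"
      using g by (intro whisker_basis_subset_compl[OF assms(1,4) openin_imp_subset[OF U(1)]] no_loop)
        auto
    ultimately show ?thesis
      using openin_whisker_topology_basis[OF _ U] g by blast
  qed
  then have "openin (whisker_topology S x0) (carrier ?G - H)"
    by (subst openin_subopen) blast
  then show ?thesis
    unfolding closedin_def topspace_whisker_topology[OF assms(1)]
    using subgroup.subset[OF assms(4)] by blast
qed

end
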